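(* There is an absolute constant $c>0$ such that the following holds. Let $n\ge 1$, $d\ge 1$, $t\ge 0$, and let $Q$ be any quantum circuit on $n$ qubits of depth $d$ whose gates are Clifford gates (from $\{H, S, \mathrm{CNOT}\}$) together with exactly $t$ gates $T=\mathrm{diag}(1,e^{i\pi/4})$. Then there exists a classical circuit $C:\{0,1\}^n\to\{0,1\}^n$, built from $\mathrm{NOT}$, $\mathrm{AND}$, $\mathrm{OR}$ gates of fan-in at most $2$ (arbitrary fan-out), of depth at most $c\,(d+t)$, that p-simulates $Q$; that is, for every $x\in\{0,1\}^n$, $\langle C(x)|\,Q\,|x\rangle\neq 0$.
   Context: The quantum circuit $Q$ takes as input a computational basis state $|x\rangle$, $x\in\{0,1\}^n$, on its $n$ qubit lines and all $n$ qubits are measured in the computational basis at the end; the unitary implemented by the circuit is also denoted $Q$. The depth of a quantum circuit is its number of layers of gates acting on disjoint qubits. $H$ is the Hadamard gate, $S=\mathrm{diag}(1,i)$, and $\mathrm{CNOT}$ is the controlled-NOT gate. The circuit $Q$ defines the relation $\mathcal{R}(Q)=\{(x,y)\in\{0,1\}^n\times\{0,1\}^n : \langle y|Q|x\rangle\neq 0\}$, and a classical circuit $C:\{0,1\}^n\to\{0,1\}^n$ is said to p-simulate $Q$ if $(x,C(x))\in\mathcal{R}(Q)$ for all $x\in\{0,1\}^n$. The depth of a classical circuit is the length of its longest input-to-output path of gates. *)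

theory Defs
  imports Complex_Main
begin

text \<open>Qubits are numbered 0..n-1; computational basis states are bool lists of length n.\<close>

datatype qgate = Hg nat | Sg nat | CNOTg nat nat | Tg nat

fun qubits :: "qgate \<Rightarrow> nat set" where
  "qubits (Hg q) = {q}"
| "qubits (Sg q) = {q}"
| "qubits (Tg q) = {q}"
| "qubits (CNOTg c t) = {c, t}"

fun qgate_wf :: "nat \<Rightarrow> qgate \<Rightarrow> bool" where
  "qgate_wf n (CNOTg c t) = (c < n \<and> t < n \<and> c \<noteq> t)"
| "qgate_wf n g = (\<forall>q\<in>qubits g. q < n)"

fun is_T :: "qgate \<Rightarrow> bool" where
  "is_T (Tg _) = True"
| "is_T _ = False"

definition layer_wf :: "nat \<Rightarrow> qgate list \<Rightarrow> bool" where
  "layer_wf n L \<longleftrightarrow> L \<noteq> [] \<and> (\<forall>g\<in>set L. qgate_wf n g) \<and>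
     (\<forall>i<length L. \<forall>j<length L. i \<noteq> j \<longrightarrow> qubits (L ! i) \<inter> qubits (L ! j) = {})"

type_synonym qcircuit = "qgate list list"

definition qcirc_wf :: "nat \<Rightarrow> qcircuit \<Rightarrow> bool" where
  "qcirc_wf n Q \<longleftrightarrow> (\<forall>L\<in>set Q. layer_wf n L)"

definition qdepth :: "qcircuit \<Rightarrow> nat" where
  "qdepth Q = length Q"

definition t_count :: "qcircuit \<Rightarrow> nat" where
  "t_count Q = length (filter is_T (concat Q))"

type_synonym qstate = "bool list \<Rightarrow> complex"

text \<open>Action of a gate on a state vector (amplitude function on basis strings).
  H|b> = (|0> + (-1)^b |1>)/sqrt 2, S = diag(1,i), T = diag(1, e^{i pi/4}),
  CNOT c t flips target t when control c is 1.\<close>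
fun apply_gate :: "qgate \<Rightarrow> qstate \<Rightarrow> qstate" where
  "apply_gate (Hg q) \<psi> = (\<lambda>y. (\<psi> (y[q := False]) + (if y ! q then -1 else 1) * \<psi> (y[q := True]))
                               / complex_of_real (sqrt 2))"
| "apply_gate (Sg q) \<psi> = (\<lambda>y. (if y ! q then \<i> else 1) * \<psi> y)"
| "apply_gate (Tg q) \<psi> = (\<lambda>y. (if y ! q then exp (\<i> * complex_of_real (pi / 4)) else 1) * \<psi> y)"
| "apply_gate (CNOTg c t) \<psi> = (\<lambda>y. \<psi> (y[t := (y ! t \<noteq> y ! c)]))"

definition basis_state :: "bool list \<Rightarrow> qstate" where
  "basis_state x = (\<lambda>y. if y = x then 1 else 0)"

text \<open>Layers are applied in order; gates within a layer act on disjoint qubits, so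
  applying them in sequence realises the layer's tensor-product unitary.\<close>
definition run_qcirc :: "qcircuit \<Rightarrow> qstate \<Rightarrow> qstate" where
  "run_qcirc Q \<psi> = fold apply_gate (concat Q) \<psi>"

definition qamp :: "qcircuit \<Rightarrow> bool list \<Rightarrow> bool list \<Rightarrow> complex" where
  "qamp Q x y = run_qcirc Q (basis_state x) y"

text \<open>Wires 0..n-1 are the inputs; wire n+k is the output of gate k, which may only read
  wires with smaller index (arbitrary fan-out). A circuit is a gate list plus a list of
  output wires.\<close>
datatype cgate = NotG nat | AndG nat nat | OrG nat nat

fun cgate_inputs :: "cgate \<Rightarrow> nat set" where
  "cgate_inputs (NotG i) = {i}"
| "cgate_inputs (AndG i j) = {i, j}"
| "cgate_inputs (OrG i j) = {i, j}"

type_synonym ccircuit = "cgate list \<times> nat list"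

definition ccirc_wf :: "nat \<Rightarrow> ccircuit \<Rightarrow> bool" where
  "ccirc_wf n C \<longleftrightarrow> (\<forall>k<length (fst C). \<forall>i\<in>cgate_inputs (fst C ! k). i < n + k)
     \<and> length (snd C) = n \<and> (\<forall>w\<in>set (snd C). w < n + length (fst C))"

fun cgate_val :: "bool list \<Rightarrow> cgate \<Rightarrow> bool" where
  "cgate_val vs (NotG i) = (\<not> vs ! i)"
| "cgate_val vs (AndG i j) = (vs ! i \<and> vs ! j)"
| "cgate_val vs (OrG i j) = (vs ! i \<or> vs ! j)"

definition wire_vals :: "cgate list \<Rightarrow> bool list \<Rightarrow> bool list" where
  "wire_vals gs x = foldl (\<lambda>vs g. vs @ [cgate_val vs g]) x gs"

definition ccirc_eval :: "ccircuit \<Rightarrow> bool list \<Rightarrow> bool list" where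
  "ccirc_eval C x = map (\<lambda>w. wire_vals (fst C) x ! w) (snd C)"

fun cgate_depth :: "nat list \<Rightarrow> cgate \<Rightarrow> nat" where
  "cgate_depth ds (NotG i) = Suc (ds ! i)"
| "cgate_depth ds (AndG i j) = Suc (max (ds ! i) (ds ! j))"
| "cgate_depth ds (OrG i j) = Suc (max (ds ! i) (ds ! j))"

definition wire_depths :: "nat \<Rightarrow> cgate list \<Rightarrow> nat list" where
  "wire_depths n gs = foldl (\<lambda>ds g. ds @ [cgate_depth ds g]) (replicate n 0) gs"

definition ccirc_depth :: "nat \<Rightarrow> ccircuit \<Rightarrow> nat" where
  "ccirc_depth n C = fold max (map (\<lambda>w. wire_depths n (fst C) ! w) (snd C)) 0"

end

theory Submission
  imports Defs
begin

text \<open>Track a Pauli frame: the state after a prefix of the circuit applied to \<open>|x\<rangle>\<close> is, up to a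
  nonzero scalar, \<open>Z\<^sup>v X\<^sup>u\<close> applied to the same prefix run on \<open>|0\<dots>0\<rangle>\<close>. Clifford gates map the frame
  to another frame by XOR-updates of \<open>u, v\<close>, costing constant depth per layer; a \<open>T\<close> gate commutes
  past the frame at the price of becoming \<open>T\<^sup>\<dagger>\<close> when the current \<open>X\<close>-bit on its qubit is set.
  Hence \<open>\<langle>y|Q|x\<rangle>\<close> equals, up to a nonzero factor, the amplitude of \<open>y \<oplus> u\<close> in one of \<open>2\<^sup>t\<close>
  frame-free circuits, selected by the \<open>t\<close> bits read off at the \<open>T\<close> gates. Each of these
  circuits, being unitary, has some output of nonzero amplitude; a multiplexer over the \<open>t\<close>
  selector bits outputs it, and XOR with the final \<open>u\<close> finishes. All bits are formulas of depth
  \<open>O(d)\<close> in \<open>x\<close>, and the multiplexer adds \<open>O(t)\<close>.\<close>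

section \<open>Pauli frames\<close>

definition xor_mask :: "bool list \<Rightarrow> (nat \<Rightarrow> bool) \<Rightarrow> bool list" where
  "xor_mask y u = map (\<lambda>i. y ! i \<noteq> u i) [0..<length y]"

definition z_sign :: "(nat \<Rightarrow> bool) \<Rightarrow> bool list \<Rightarrow> complex" where
  "z_sign v y = (\<Prod>i<length y. if v i \<and> y ! i then -1 else 1)"

text \<open>\<open>pauli_rel n \<psi> c u v \<phi>\<close> says \<open>\<psi> = c \<cdot> Z\<^sup>v X\<^sup>u \<phi>\<close> on basis strings of length \<open>n\<close>.\<close>
definition pauli_rel :: "nat \<Rightarrow> qstate \<Rightarrow> complex \<Rightarrow> (nat \<Rightarrow> bool) \<Rightarrow> (nat \<Rightarrow> bool) \<Rightarrow> qstate \<Rightarrow> bool" where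
  "pauli_rel n \<psi> c u v \<phi> \<longleftrightarrow> (\<forall>y. length y = n \<longrightarrow> \<psi> y = c * z_sign v y * \<phi> (xor_mask y u))"

lemma length_xor_mask [simp]: "length (xor_mask y u) = length y"
  by (simp add: xor_mask_def)

lemma nth_xor_mask [simp]: "i < length y \<Longrightarrow> xor_mask y u ! i = (y ! i \<noteq> u i)"
  by (simp add: xor_mask_def)

lemma xor_mask_list_update:
  "q < length y \<Longrightarrow> xor_mask (y[q := b]) u = (xor_mask y u)[q := (b \<noteq> u q)]"
  by (rule nth_equalityI) (auto simp: nth_list_update)

lemma xor_mask_fun_upd:
  "q < length y \<Longrightarrow> xor_mask y (u(q := a)) = (xor_mask y u)[q := (y ! q \<noteq> a)]"
  by (rule nth_equalityI) (auto simp: nth_list_update)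

lemma xor_mask_xor_mask [simp]: "xor_mask (xor_mask y u) u = y"
  by (rule nth_equalityI) auto

lemma z_sign_remove:
  assumes "q < length y"
  shows "z_sign v y = z_sign (v(q := False)) y * (if v q \<and> y ! q then -1 else 1)"
proof -
  let ?f = "\<lambda>v i. if v i \<and> y ! i then -1 else (1::complex)"
  have "z_sign v y = ?f v q * (\<Prod>i\<in>{..<length y} - {q}. ?f v i)"
    unfolding z_sign_def using assms by (subst prod.remove[of _ q]) auto
  moreover have "z_sign (v(q := False)) y = (\<Prod>i\<in>{..<length y} - {q}. ?f v i)"
    unfolding z_sign_def using assms by (subst prod.remove[of _ q]) (auto intro!: prod.cong)
  ultimately show ?thesis
    by simp
qed

lemma z_sign_list_update:
  assumes "q < length y"
  shows "z_sign v (y[q := b]) = z_sign (v(q := False)) y * (if v q \<and> b then -1 else 1)"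
proof -
  have "z_sign (v(q := False)) (y[q := b]) = z_sign (v(q := False)) y"
    unfolding z_sign_def using assms by (auto intro!: prod.cong simp: nth_list_update)
  then show ?thesis
    using z_sign_remove[of q "y[q := b]" v] assms by simp
qed

lemma z_sign_nonzero: "z_sign v y \<noteq> 0"
  unfolding z_sign_def by (auto simp: prod_zero_iff)

lemma pauli_rel_H:
  assumes rel: "pauli_rel n \<psi> c u v \<phi>" and q: "q < n"
  shows "pauli_rel n (apply_gate (Hg q) \<psi>) (if u q \<and> v q then -c else c)
           (u(q := v q)) (v(q := u q)) (apply_gate (Hg q) \<phi>)"
  unfolding pauli_rel_def
proof (intro allI impI)
  fix y :: "bool list"
  assume y: "length y = n"
  let ?w = "xor_mask y u" and ?p = "z_sign (v(q := False)) y"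
  have \<psi>: "\<psi> (y[q := b]) = c * (?p * (if v q \<and> b then -1 else 1)) * \<phi> (?w[q := (b \<noteq> u q)])" for b
    using rel y q by (simp add: pauli_rel_def z_sign_list_update xor_mask_list_update)
  have sign: "z_sign (v(q := u q)) y = ?p * (if u q \<and> y ! q then -1 else 1)"
    using z_sign_remove[of q y "v(q := u q)"] y q by simp
  have mask: "xor_mask y (u(q := v q)) = ?w[q := (y ! q \<noteq> v q)]"
    using xor_mask_fun_upd y q by simp
  have "q < length ?w"
    using y q by simp
  then show "apply_gate (Hg q) \<psi> y = (if u q \<and> v q then -c else c) * z_sign (v(q := u q)) y
      * apply_gate (Hg q) \<phi> (xor_mask y (u(q := v q)))"
    by (simp only: apply_gate.simps \<psi> sign mask)
      (cases "u q"; cases "v q"; cases "y ! q"; simp add: field_simps)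
qed

lemma pauli_rel_S:
  assumes rel: "pauli_rel n \<psi> c u v \<phi>" and q: "q < n"
  shows "pauli_rel n (apply_gate (Sg q) \<psi>) (if u q then -\<i> * c else c)
           u (v(q := (v q \<noteq> u q))) (apply_gate (Sg q) \<phi>)"
  unfolding pauli_rel_def
proof (intro allI impI)
  fix y :: "bool list"
  assume y: "length y = n"
  let ?p = "z_sign (v(q := False)) y"
  have sign: "z_sign v y = ?p * (if v q \<and> y ! q then -1 else 1)"
    "z_sign (v(q := (v q \<noteq> u q))) y = ?p * (if (v q \<noteq> u q) \<and> y ! q then -1 else 1)"
    using z_sign_remove[of q y v] z_sign_remove[of q y "v(q := (v q \<noteq> u q))"] y q by simp_all
  have \<psi>: "\<psi> y = c * z_sign v y * \<phi> (xor_mask y u)"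
    using rel y by (simp add: pauli_rel_def)
  have mask: "xor_mask y u ! q = (y ! q \<noteq> u q)"
    using y q by simp
  show "apply_gate (Sg q) \<psi> y = (if u q then -\<i> * c else c) * z_sign (v(q := (v q \<noteq> u q))) y
      * apply_gate (Sg q) \<phi> (xor_mask y u)"
    by (simp only: apply_gate.simps \<psi> sign mask)
      (cases "u q"; cases "v q"; cases "y ! q"; simp add: field_simps)
qed

lemma pauli_rel_CNOT:
  assumes rel: "pauli_rel n \<psi> c u v \<phi>" and q: "a < n" "b < n" "a \<noteq> b"
  shows "pauli_rel n (apply_gate (CNOTg a b) \<psi>) c
           (u(b := (u b \<noteq> u a))) (v(a := (v a \<noteq> v b))) (apply_gate (CNOTg a b) \<phi>)"
  unfolding pauli_rel_def
proof (intro allI impI)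
  fix y :: "bool list"
  assume y: "length y = n"
  let ?w = "xor_mask y u" and ?p = "z_sign ((v(b := False))(a := False)) y"
    and ?y' = "y[b := (y ! b \<noteq> y ! a)]" and ?u' = "u(b := (u b \<noteq> u a))"
  have \<psi>: "\<psi> ?y' = c * z_sign v ?y' * \<phi> (xor_mask ?y' u)"
    using rel y by (simp add: pauli_rel_def)
  have sign: "z_sign v ?y' = ?p * (if v a \<and> y ! a then -1 else 1) * (if v b \<and> (y ! b \<noteq> y ! a) then -1 else 1)"
    "z_sign (v(a := (v a \<noteq> v b))) y = ?p * (if v b \<and> y ! b then -1 else 1) * (if (v a \<noteq> v b) \<and> y ! a then -1 else 1)"
    using z_sign_list_update[of b y v] z_sign_remove[of a y "v(b := False)"]
      z_sign_remove[of a y "v(a := (v a \<noteq> v b))"] z_sign_remove[of b y "v(a := False)"] y q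
    by (simp_all add: fun_upd_twist)
  have mask: "xor_mask ?y' u = ?w[b := ((y ! b \<noteq> y ! a) \<noteq> u b)]"
    "(xor_mask y ?u')[b := (xor_mask y ?u' ! b \<noteq> xor_mask y ?u' ! a)] = ?w[b := ((y ! b \<noteq> y ! a) \<noteq> u b)]"
    using xor_mask_list_update y q by (auto intro!: nth_equalityI simp: nth_list_update)
  show "apply_gate (CNOTg a b) \<psi> y = c * z_sign (v(a := (v a \<noteq> v b))) y
      * apply_gate (CNOTg a b) \<phi> (xor_mask y ?u')"
    by (simp only: apply_gate.simps \<psi> sign mask)
      (cases "v a"; cases "v b"; cases "y ! a"; cases "y ! b"; simp)
qed

definition t_phase :: complex where
  "t_phase = exp (\<i> * complex_of_real (pi / 4))"

text \<open>\<open>T\<close> if the bit is false, \<open>T\<^sup>\<dagger>\<close> if it is true: since \<open>T X = t_phase \<cdot> X T\<^sup>\<dagger>\<close>, a \<open>T\<close> gate meeting an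
  \<open>X\<close> in the frame turns into \<open>T\<^sup>\<dagger>\<close>.\<close>
definition apply_T_branch :: "bool \<Rightarrow> nat \<Rightarrow> qstate \<Rightarrow> qstate" where
  "apply_T_branch b q \<phi> = (\<lambda>y. (if y ! q then (if b then inverse t_phase else t_phase) else 1) * \<phi> y)"

lemma t_phase_nonzero: "t_phase \<noteq> 0"
  by (simp add: t_phase_def)

lemma pauli_rel_T:
  assumes rel: "pauli_rel n \<psi> c u v \<phi>" and q: "q < n"
  shows "pauli_rel n (apply_gate (Tg q) \<psi>) (if u q then t_phase * c else c) u v (apply_T_branch (u q) q \<phi>)"
  unfolding pauli_rel_def
proof (intro allI impI)
  fix y :: "bool list"
  assume y: "length y = n"
  have \<psi>: "\<psi> y = c * z_sign v y * \<phi> (xor_mask y u)"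
    using rel y by (simp add: pauli_rel_def)
  have mask: "xor_mask y u ! q = (y ! q \<noteq> u q)"
    using y q by simp
  show "apply_gate (Tg q) \<psi> y = (if u q then t_phase * c else c) * z_sign v y
      * apply_T_branch (u q) q \<phi> (xor_mask y u)"
    using t_phase_nonzero
    by (simp only: apply_gate.simps apply_T_branch_def \<psi> mask flip: t_phase_def)
      (cases "u q"; cases "y ! q"; simp add: field_simps)
qed

type_synonym pauli = "(nat \<Rightarrow> bool) \<times> (nat \<Rightarrow> bool)"

fun pauli_step :: "qgate \<Rightarrow> pauli \<Rightarrow> pauli" where
  "pauli_step (Hg q) (u, v) = (u(q := v q), v(q := u q))"
| "pauli_step (Sg q) (u, v) = (u, v(q := (v q \<noteq> u q)))"
| "pauli_step (Tg q) (u, v) = (u, v)"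
| "pauli_step (CNOTg a b) (u, v) = (u(b := (u b \<noteq> u a)), v(a := (v a \<noteq> v b)))"

fun t_branch_bits :: "qgate \<Rightarrow> pauli \<Rightarrow> bool list" where
  "t_branch_bits (Tg q) (u, v) = [u q]"
| "t_branch_bits _ _ = []"

fun track_pauli :: "qgate list \<Rightarrow> pauli \<Rightarrow> pauli \<times> bool list" where
  "track_pauli [] p = (p, [])"
| "track_pauli (g # gs) p =
     (let (p', bs) = track_pauli gs (pauli_step g p) in (p', t_branch_bits g p @ bs))"

fun branch_gate :: "qgate \<Rightarrow> pauli \<Rightarrow> qstate \<Rightarrow> qstate" where
  "branch_gate (Tg q) (u, v) = apply_T_branch (u q) q"
| "branch_gate g p = apply_gate g"

fun run_branch :: "qgate list \<Rightarrow> bool list \<Rightarrow> qstate \<Rightarrow> qstate" where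
  "run_branch [] bs \<phi> = \<phi>"
| "run_branch (Tg q # gs) bs \<phi> = run_branch gs (tl bs) (apply_T_branch (hd bs) q \<phi>)"
| "run_branch (g # gs) bs \<phi> = run_branch gs bs (apply_gate g \<phi>)"

lemma run_branch_Cons:
  "run_branch (g # gs) (t_branch_bits g p @ bs) \<phi> = run_branch gs bs (branch_gate g p \<phi>)"
  by (cases p; cases g) auto

lemma pauli_rel_step:
  assumes rel: "pauli_rel n \<psi> c (fst p) (snd p) \<phi>" and wf: "qgate_wf n g" and "c \<noteq> 0"
  shows "\<exists>c'. c' \<noteq> 0 \<and> pauli_rel n (apply_gate g \<psi>) c' (fst (pauli_step g p)) (snd (pauli_step g p))
           (branch_gate g p \<phi>)"
proof -
  obtain u v where p: "p = (u, v)"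
    by fastforce
  show ?thesis
  proof (cases g)
    case (Hg q)
    then show ?thesis
      using pauli_rel_H[of n \<psi> c u v \<phi> q] rel wf \<open>c \<noteq> 0\<close> p by (intro exI[of _ "if u q \<and> v q then -c else c"]) auto
  next
    case (Sg q)
    then show ?thesis
      using pauli_rel_S[of n \<psi> c u v \<phi> q] rel wf \<open>c \<noteq> 0\<close> p by (intro exI[of _ "if u q then -\<i> * c else c"]) auto
  next
    case (Tg q)
    then show ?thesis
      using pauli_rel_T[of n \<psi> c u v \<phi> q] rel wf \<open>c \<noteq> 0\<close> t_phase_nonzero p
      by (intro exI[of _ "if u q then t_phase * c else c"]) auto
  next
    case (CNOTg a b)
    then show ?thesis
      using pauli_rel_CNOT[of n \<psi> c u v \<phi> a b] rel wf \<open>c \<noteq> 0\<close> p by (intro exI[of _ c]) auto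
  qed
qed

lemma pauli_rel_fold:
  assumes "pauli_rel n \<psi> c (fst p) (snd p) \<phi>" "c \<noteq> 0" "\<forall>g\<in>set gs. qgate_wf n g"
  shows "\<exists>c'. c' \<noteq> 0 \<and> pauli_rel n (fold apply_gate gs \<psi>) c'
           (fst (fst (track_pauli gs p))) (snd (fst (track_pauli gs p)))
           (run_branch gs (snd (track_pauli gs p)) \<phi>)"
  using assms
proof (induction gs arbitrary: \<psi> c p \<phi>)
  case Nil
  then show ?case
    by auto
next
  case (Cons g gs)
  obtain c' where "c' \<noteq> 0" and rel': "pauli_rel n (apply_gate g \<psi>) c'
      (fst (pauli_step g p)) (snd (pauli_step g p)) (branch_gate g p \<phi>)"
    using pauli_rel_step[OF Cons.prems(1) _ Cons.prems(2), of g] Cons.prems(3) by auto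
  from Cons.IH[OF rel' \<open>c' \<noteq> 0\<close>] Cons.prems(3) show ?case
    by (auto simp: split_def Let_def run_branch_Cons[symmetric])
qed

definition nonzero_on :: "nat \<Rightarrow> qstate \<Rightarrow> bool" where
  "nonzero_on n \<phi> \<longleftrightarrow> (\<exists>y. length y = n \<and> \<phi> y \<noteq> 0)"

lemma nonzero_on_apply_gate:
  assumes "nonzero_on n \<phi>" "qgate_wf n g"
  shows "nonzero_on n (apply_gate g \<phi>)"
proof (rule ccontr)
  assume "\<not> nonzero_on n (apply_gate g \<phi>)"
  then have zero: "\<And>y. length y = n \<Longrightarrow> apply_gate g \<phi> y = 0"
    by (auto simp: nonzero_on_def)
  obtain y where y: "length y = n" "\<phi> y \<noteq> 0"
    using assms(1) by (auto simp: nonzero_on_def)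
  show False
  proof (cases g)
    case (Hg q)
    have "q < n"
      using assms(2) Hg by simp
    then have "\<phi> (y[q := False]) + \<phi> (y[q := True]) = 0" "\<phi> (y[q := False]) - \<phi> (y[q := True]) = 0"
      using zero[of "y[q := False]"] zero[of "y[q := True]"] Hg y by auto
    then have "\<phi> (y[q := b]) = 0" for b
      by (cases b) (auto simp: algebra_simps)
    then show False
      using y by (metis list_update_id)
  next
    case (CNOTg a b)
    let ?y' = "y[b := (y ! b \<noteq> y ! a)]"
    have "a < n" "b < n" "a \<noteq> b"
      using assms(2) CNOTg by auto
    then have "?y'[b := (?y' ! b \<noteq> ?y' ! a)] = y"
      using y by (intro nth_equalityI) (auto simp: nth_list_update)
    then show False
      using zero[of ?y'] y CNOTg by auto
  qed (use zero[OF y(1)] y in \<open>auto split: if_splits\<close>)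
qed

lemma nonzero_on_apply_T_branch: "nonzero_on n \<phi> \<Longrightarrow> nonzero_on n (apply_T_branch b q \<phi>)"
  using t_phase_nonzero unfolding nonzero_on_def apply_T_branch_def by (auto split: if_splits)

lemma nonzero_on_run_branch:
  "nonzero_on n \<phi> \<Longrightarrow> \<forall>g\<in>set gs. qgate_wf n g \<Longrightarrow> nonzero_on n (run_branch gs bs \<phi>)"
  by (induction gs bs \<phi> rule: run_branch.induct)
    (simp_all del: apply_gate.simps add: nonzero_on_apply_T_branch nonzero_on_apply_gate)

lemma pauli_rel_basis_state:
  assumes "length x = n"
  shows "pauli_rel n (basis_state x) 1 (\<lambda>i. i < n \<and> x ! i) (\<lambda>i. False) (basis_state (replicate n False))"
  unfolding pauli_rel_def
proof (intro allI impI)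
  fix y :: "bool list"
  assume y: "length y = n"
  have "(xor_mask y (\<lambda>i. i < n \<and> x ! i) = replicate n False) = (y = x)"
    using assms y by (auto simp: list_eq_iff_nth_eq)
  moreover have "z_sign (\<lambda>i. False) y = 1"
    by (simp add: z_sign_def)
  ultimately show "basis_state x y = 1 * z_sign (\<lambda>i. False) y
      * basis_state (replicate n False) (xor_mask y (\<lambda>i. i < n \<and> x ! i))"
    by (simp add: basis_state_def)
qed

section \<open>Boolean formulas\<close>

datatype bexp = BVar nat | BNot bexp | BAnd bexp bexp | BOr bexp bexp

fun bval :: "bexp \<Rightarrow> bool list \<Rightarrow> bool" where
  "bval (BVar i) x = x ! i"
| "bval (BNot e) x = (\<not> bval e x)"
| "bval (BAnd a b) x = (bval a x \<and> bval b x)"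
| "bval (BOr a b) x = (bval a x \<or> bval b x)"

fun bdepth :: "bexp \<Rightarrow> nat" where
  "bdepth (BVar i) = 0"
| "bdepth (BNot e) = Suc (bdepth e)"
| "bdepth (BAnd a b) = Suc (max (bdepth a) (bdepth b))"
| "bdepth (BOr a b) = Suc (max (bdepth a) (bdepth b))"

fun bvars_below :: "nat \<Rightarrow> bexp \<Rightarrow> bool" where
  "bvars_below n (BVar i) = (i < n)"
| "bvars_below n (BNot e) = bvars_below n e"
| "bvars_below n (BAnd a b) = (bvars_below n a \<and> bvars_below n b)"
| "bvars_below n (BOr a b) = (bvars_below n a \<and> bvars_below n b)"

definition bxor :: "bexp \<Rightarrow> bexp \<Rightarrow> bexp" where
  "bxor a b = BAnd (BOr a b) (BNot (BAnd a b))"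

lemma bxor_simps [simp]:
  "bval (bxor a b) x = (bval a x \<noteq> bval b x)"
  "bdepth (bxor a b) = max (bdepth a) (bdepth b) + 3"
  "bvars_below n (bxor a b) = (bvars_below n a \<and> bvars_below n b)"
  by (auto simp: bxor_def max_def)

text \<open>The gates have no constants, so the constants are built from input \<open>0\<close>.\<close>
definition bfalse :: bexp where
  "bfalse = BAnd (BVar 0) (BNot (BVar 0))"

definition btrue :: bexp where
  "btrue = BOr (BVar 0) (BNot (BVar 0))"

lemma bfalse_simps [simp]: "bval bfalse x = False" "bdepth bfalse = 2" "bvars_below n bfalse = (0 < n)"
  by (auto simp: bfalse_def)

lemma btrue_simps [simp]: "bval btrue x = True" "bdepth btrue = 2" "bvars_below n btrue = (0 < n)"
  by (auto simp: btrue_def)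

fun bmux :: "bexp list \<Rightarrow> (bool list \<Rightarrow> bool) \<Rightarrow> bexp" where
  "bmux [] f = (if f [] then btrue else bfalse)"
| "bmux (m # ms) f =
     BOr (BAnd m (bmux ms (\<lambda>bs. f (True # bs)))) (BAnd (BNot m) (bmux ms (\<lambda>bs. f (False # bs))))"

lemma bval_bmux: "bval (bmux ms f) x = f (map (\<lambda>m. bval m x) ms)"
proof (induction ms arbitrary: f)
  case (Cons m ms)
  then show ?case
    by (cases "bval m x") simp_all
qed simp

lemma bdepth_bmux: "\<forall>m\<in>set ms. bdepth m \<le> D \<Longrightarrow> bdepth (bmux ms f) \<le> D + 2 * length ms + 2"
proof (induction ms arbitrary: f)
  case (Cons m ms)
  then have "bdepth (bmux ms (\<lambda>bs. f (b # bs))) \<le> D + 2 * length ms + 2" "bdepth m \<le> D" for b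
    by auto
  then show ?case
    by (simp add: max_def)
qed simp

lemma bvars_below_bmux: "0 < n \<Longrightarrow> \<forall>m\<in>set ms. bvars_below n m \<Longrightarrow> bvars_below n (bmux ms f)"
  by (induction ms arbitrary: f) auto

section \<open>Symbolic frames\<close>

type_synonym bframe = "(nat \<Rightarrow> bexp) \<times> (nat \<Rightarrow> bexp)"

fun sym_step :: "qgate \<Rightarrow> bframe \<Rightarrow> bframe" where
  "sym_step (Hg q) (U, W) = (U(q := W q), W(q := U q))"
| "sym_step (Sg q) (U, W) = (U, W(q := bxor (W q) (U q)))"
| "sym_step (Tg q) (U, W) = (U, W)"
| "sym_step (CNOTg a b) (U, W) = (U(b := bxor (U b) (U a)), W(a := bxor (W a) (W b)))"

fun sym_t_bits :: "qgate \<Rightarrow> bframe \<Rightarrow> bexp list" where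
  "sym_t_bits (Tg q) (U, W) = [U q]"
| "sym_t_bits _ _ = []"

fun track_sym :: "qgate list \<Rightarrow> bframe \<Rightarrow> bframe \<times> bexp list" where
  "track_sym [] P = (P, [])"
| "track_sym (g # gs) P =
     (let (P', es) = track_sym gs (sym_step g P) in (P', sym_t_bits g P @ es))"

definition frame_val :: "bool list \<Rightarrow> bframe \<Rightarrow> pauli" where
  "frame_val x P = ((\<lambda>i. bval (fst P i) x), (\<lambda>i. bval (snd P i) x))"

lemma track_pauli_frame_val:
  "track_pauli gs (frame_val x P) =
     (frame_val x (fst (track_sym gs P)), map (\<lambda>e. bval e x) (snd (track_sym gs P)))"
proof (induction gs arbitrary: P)
  case (Cons g gs)
  have "pauli_step g (frame_val x P) = frame_val x (sym_step g P)"
    "t_branch_bits g (frame_val x P) = map (\<lambda>e. bval e x) (sym_t_bits g P)"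
    by (cases P; cases g; auto simp: frame_val_def fun_eq_iff)+
  then show ?case
    using Cons.IH by (simp add: split_def Let_def)
qed simp

lemma track_sym_append:
  "track_sym (gs @ hs) P =
     (fst (track_sym hs (fst (track_sym gs P))), snd (track_sym gs P) @ snd (track_sym hs (fst (track_sym gs P))))"
  by (induction gs arbitrary: P) (auto simp: split_def Let_def)

lemma length_track_sym_bits: "length (snd (track_sym gs P)) = length (filter is_T gs)"
proof (induction gs arbitrary: P)
  case (Cons g gs)
  then show ?case
    by (cases P; cases g) (auto simp: split_def Let_def)
qed simp

definition frame_vars_below :: "nat \<Rightarrow> bframe \<Rightarrow> bool" where
  "frame_vars_below n P \<longleftrightarrow> (\<forall>i. bvars_below n (fst P i) \<and> bvars_below n (snd P i))"

lemma frame_vars_below_track_sym: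
  "frame_vars_below n P \<Longrightarrow>
     frame_vars_below n (fst (track_sym gs P)) \<and> (\<forall>e\<in>set (snd (track_sym gs P)). bvars_below n e)"
proof (induction gs arbitrary: P)
  case (Cons g gs)
  have "frame_vars_below n (sym_step g P) \<and> (\<forall>e\<in>set (sym_t_bits g P). bvars_below n e)"
    using Cons.prems by (cases P; cases g) (auto simp: frame_vars_below_def)
  then show ?case
    using Cons.IH[of "sym_step g P"] by (auto simp: split_def Let_def)
qed simp

definition frame_depth_le :: "(nat \<Rightarrow> nat) \<Rightarrow> bframe \<Rightarrow> bool" where
  "frame_depth_le B P \<longleftrightarrow> (\<forall>i. bdepth (fst P i) \<le> B i \<and> bdepth (snd P i) \<le> B i)"

lemma frame_depth_le_mono: "frame_depth_le B P \<Longrightarrow> (\<And>i. B i \<le> B' i) \<Longrightarrow> frame_depth_le B' P"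
  unfolding frame_depth_le_def using le_trans by blast

lemma frame_depth_le_update:
  assumes "frame_depth_le B (U, W)" "bdepth a \<le> B q" "bdepth b \<le> B r"
  shows "frame_depth_le B (U(q := a), W(r := b))"
  using assms by (auto simp: frame_depth_le_def)

text \<open>While a layer is processed, the qubits in \<open>S\<close> have already been acted on: their entries may
  have grown by one \<open>bxor\<close>, whereas the gates still to come read only untouched entries.\<close>
lemma sym_step_depth:
  assumes disj: "qubits g \<inter> S = {}" and P: "frame_depth_le (\<lambda>i. if i \<in> S then D + 3 else D) P"
  shows "frame_depth_le (\<lambda>i. if i \<in> S \<union> qubits g then D + 3 else D) (sym_step g P)
    \<and> (\<forall>e\<in>set (sym_t_bits g P). bdepth e \<le> D)"
proof -
  obtain U W where UW: "P = (U, W)"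
    by fastforce
  let ?B = "\<lambda>i. if i \<in> S \<union> qubits g then D + 3 else D"
  have B: "frame_depth_le ?B (U, W)"
    using P UW by (auto elim!: frame_depth_le_mono)
  have old: "bdepth (U q) \<le> D" "bdepth (W q) \<le> D" if "q \<in> qubits g" for q
  proof -
    have "q \<notin> S"
      using disj that by blast
    then show "bdepth (U q) \<le> D" "bdepth (W q) \<le> D"
      using P UW unfolding frame_depth_le_def by (metis fst_conv snd_conv)+
  qed
  have new: "?B q = D + 3" if "q \<in> qubits g" for q
    using that by simp
  show ?thesis
  proof (cases g)
    case (Hg q)
    then show ?thesis
      using frame_depth_le_update[OF B, of "W q" q "U q" q] old[of q] new[of q] UW by simp
  next
    case (Sg q)
    then show ?thesis
      using frame_depth_le_update[OF B, of "U q" q "bxor (W q) (U q)" q] old[of q] new[of q] UW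
      by (simp add: fun_upd_idem)
  next
    case (Tg q)
    then show ?thesis
      using B old[of q] UW by simp
  next
    case (CNOTg a b)
    then show ?thesis
      using frame_depth_le_update[OF B, of "bxor (U b) (U a)" b "bxor (W a) (W b)" a]
        old[of a] old[of b] new[of a] new[of b] UW by simp
  qed
qed

lemma track_sym_layer_depth:
  "sorted_wrt (\<lambda>g h. qubits g \<inter> qubits h = {}) L \<Longrightarrow> \<forall>g\<in>set L. qubits g \<inter> S = {} \<Longrightarrow>
   frame_depth_le (\<lambda>i. if i \<in> S then D + 3 else D) P \<Longrightarrow>
   frame_depth_le (\<lambda>i. D + 3) (fst (track_sym L P)) \<and> (\<forall>e\<in>set (snd (track_sym L P)). bdepth e \<le> D)"
proof (induction L arbitrary: S P)
  case Nil
  then show ?case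
    by (auto elim: frame_depth_le_mono)
next
  case (Cons g L)
  have "frame_depth_le (\<lambda>i. if i \<in> S \<union> qubits g then D + 3 else D) (sym_step g P)
    \<and> (\<forall>e\<in>set (sym_t_bits g P). bdepth e \<le> D)"
    by (rule sym_step_depth) (use Cons.prems in auto)
  moreover have "\<forall>h\<in>set L. qubits h \<inter> (S \<union> qubits g) = {}"
    using Cons.prems by auto
  ultimately show ?case
    using Cons.IH[of "S \<union> qubits g" "sym_step g P"] Cons.prems(1) by (auto simp: split_def Let_def)
qed

lemma track_sym_circuit_depth:
  "\<forall>L\<in>set Q. sorted_wrt (\<lambda>g h. qubits g \<inter> qubits h = {}) L \<Longrightarrow> frame_depth_le (\<lambda>i. D) P \<Longrightarrow>
   frame_depth_le (\<lambda>i. D + 3 * length Q) (fst (track_sym (concat Q) P))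
   \<and> (\<forall>e\<in>set (snd (track_sym (concat Q) P)). bdepth e \<le> D + 3 * length Q)"
proof (induction Q arbitrary: D P)
  case (Cons L Q)
  have "frame_depth_le (\<lambda>i. D + 3) (fst (track_sym L P)) \<and> (\<forall>e\<in>set (snd (track_sym L P)). bdepth e \<le> D)"
    using Cons.prems by (intro track_sym_layer_depth) auto
  then show ?case
    using Cons.IH[of "D + 3" "fst (track_sym L P)"] Cons.prems(1)
    by (fastforce simp: track_sym_append add.assoc)
qed simp

section \<open>Compiling formulas into classical circuits\<close>

lemma length_foldl_snoc: "length (foldl (\<lambda>vs g. vs @ [h vs g]) a gs) = length a + length gs"
  by (induction gs arbitrary: a) auto

lemma nth_foldl_snoc_append:
  assumes "i < length a + length gs"
  shows "foldl (\<lambda>vs g. vs @ [h vs g]) a (gs @ hs) ! i = foldl (\<lambda>vs g. vs @ [h vs g]) a gs ! i"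
proof -
  have "\<exists>r. foldl (\<lambda>vs g. vs @ [h vs g]) b hs = b @ r" for b
    by (induction hs arbitrary: b) (auto, metis append.assoc)
  then obtain r where "foldl (\<lambda>vs g. vs @ [h vs g]) (foldl (\<lambda>vs g. vs @ [h vs g]) a gs) hs
      = foldl (\<lambda>vs g. vs @ [h vs g]) a gs @ r"
    by blast
  then show ?thesis
    using assms by (simp add: nth_append length_foldl_snoc)
qed

lemma length_wire_vals: "length (wire_vals gs x) = length x + length gs"
  unfolding wire_vals_def by (rule length_foldl_snoc)

lemma nth_wire_vals_append: "i < length x + length gs \<Longrightarrow> wire_vals (gs @ hs) x ! i = wire_vals gs x ! i"
  unfolding wire_vals_def by (rule nth_foldl_snoc_append)

lemma wire_vals_snoc: "wire_vals (gs @ [g]) x = wire_vals gs x @ [cgate_val (wire_vals gs x) g]"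
  by (simp add: wire_vals_def)

lemma nth_wire_vals_input: "i < length x \<Longrightarrow> wire_vals gs x ! i = x ! i"
  using nth_wire_vals_append[of i x "[]" gs] by (simp add: wire_vals_def)

lemma length_wire_depths: "length (wire_depths n gs) = n + length gs"
  unfolding wire_depths_def using length_foldl_snoc[of _ "replicate n 0"] by simp

lemma nth_wire_depths_append: "i < n + length gs \<Longrightarrow> wire_depths n (gs @ hs) ! i = wire_depths n gs ! i"
  unfolding wire_depths_def using nth_foldl_snoc_append[of i "replicate n 0" gs] by simp

lemma wire_depths_snoc: "wire_depths n (gs @ [g]) = wire_depths n gs @ [cgate_depth (wire_depths n gs) g]"
  by (simp add: wire_depths_def)

lemma nth_wire_depths_input: "i < n \<Longrightarrow> wire_depths n gs ! i = 0"
  using nth_wire_depths_append[of i n "[]" gs] by (simp add: wire_depths_def)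

text \<open>\<open>b\<close> counts the wires preceding \<open>hs\<close>.\<close>
definition cgates_wf :: "nat \<Rightarrow> cgate list \<Rightarrow> bool" where
  "cgates_wf b hs \<longleftrightarrow> (\<forall>k<length hs. \<forall>i\<in>cgate_inputs (hs ! k). i < b + k)"

lemma cgates_wf_append: "cgates_wf b (hs @ hs') \<longleftrightarrow> cgates_wf b hs \<and> cgates_wf (b + length hs) hs'"
  unfolding cgates_wf_def
proof (intro iffI conjI allI impI)
  fix k
  assume A: "\<forall>k<length (hs @ hs'). \<forall>i\<in>cgate_inputs ((hs @ hs') ! k). i < b + k"
  show "\<forall>i\<in>cgate_inputs (hs ! k). i < b + k" if "k < length hs"
    using A[rule_format, of k] that by (simp add: nth_append)
  show "\<forall>i\<in>cgate_inputs (hs' ! k). i < b + length hs + k" if "k < length hs'"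
    using A[rule_format, of "length hs + k"] that by (simp add: nth_append add.assoc)
next
  fix k
  assume A: "(\<forall>k<length hs. \<forall>i\<in>cgate_inputs (hs ! k). i < b + k) \<and>
      (\<forall>k<length hs'. \<forall>i\<in>cgate_inputs (hs' ! k). i < b + length hs + k)"
    and k: "k < length (hs @ hs')"
  show "\<forall>i\<in>cgate_inputs ((hs @ hs') ! k). i < b + k"
  proof (cases "k < length hs")
    case True
    then show ?thesis
      using A by (simp add: nth_append)
  next
    case False
    then show ?thesis
      using A k by (auto simp: nth_append dest!: spec[of _ "k - length hs"])
  qed
qed

text \<open>No sharing of subformulas, so wire depth is bounded by formula depth.\<close>
fun compile_bexp :: "nat \<Rightarrow> bexp \<Rightarrow> cgate list \<times> nat" where
  "compile_bexp b (BVar i) = ([], i)"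
| "compile_bexp b (BNot e) = (fst (compile_bexp b e) @ [NotG (snd (compile_bexp b e))], b + length (fst (compile_bexp b e)))"
| "compile_bexp b (BAnd e1 e2) =
     (let (h1, w1) = compile_bexp b e1; (h2, w2) = compile_bexp (b + length h1) e2
      in (h1 @ h2 @ [AndG w1 w2], b + length h1 + length h2))"
| "compile_bexp b (BOr e1 e2) =
     (let (h1, w1) = compile_bexp b e1; (h2, w2) = compile_bexp (b + length h1) e2
      in (h1 @ h2 @ [OrG w1 w2], b + length h1 + length h2))"

definition computes :: "nat \<Rightarrow> bool list \<Rightarrow> cgate list \<Rightarrow> cgate list \<Rightarrow> nat \<Rightarrow> bexp \<Rightarrow> bool" where
  "computes n x gs hs w e \<longleftrightarrow> w < n + length gs + length hs \<and> cgates_wf (n + length gs) hs \<and>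
     wire_vals (gs @ hs) x ! w = bval e x \<and> wire_depths n (gs @ hs) ! w \<le> bdepth e"

lemma computes_append:
  assumes "length x = n" "computes n x gs hs w e"
  shows "computes n x gs (hs @ hs') w e \<longleftrightarrow> cgates_wf (n + length gs + length hs) hs'"
  using assms nth_wire_vals_append[of w x "gs @ hs" hs'] nth_wire_depths_append[of w n "gs @ hs" hs']
  by (auto simp: computes_def cgates_wf_append add.assoc)

lemma computes_snoc:
  assumes "length x = n" "cgates_wf (n + length gs) hs" "cgates_wf (n + length gs + length hs) [g]"
    and "cgate_val (wire_vals (gs @ hs) x) g = bval e x"
    and "cgate_depth (wire_depths n (gs @ hs)) g \<le> bdepth e"
  shows "computes n x gs (hs @ [g]) (n + length gs + length hs) e"
proof -
  have "wire_vals (gs @ hs @ [g]) x = wire_vals (gs @ hs) x @ [cgate_val (wire_vals (gs @ hs) x) g]"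
    "wire_depths n (gs @ hs @ [g]) = wire_depths n (gs @ hs) @ [cgate_depth (wire_depths n (gs @ hs)) g]"
    using wire_vals_snoc[of "gs @ hs"] wire_depths_snoc[of n "gs @ hs"] by simp_all
  moreover have "length (wire_vals (gs @ hs) x) = n + length gs + length hs"
    "length (wire_depths n (gs @ hs)) = n + length gs + length hs"
    using assms(1) by (simp_all add: length_wire_vals length_wire_depths)
  ultimately show ?thesis
    using assms by (simp add: computes_def wire_vals_snoc wire_depths_snoc nth_append cgates_wf_append)
qed

lemma computes_compile_bexp:
  "length x = n \<Longrightarrow> bvars_below n e \<Longrightarrow>
     computes n x gs (fst (compile_bexp (n + length gs) e)) (snd (compile_bexp (n + length gs) e)) e"
proof (induction e arbitrary: gs)
  case (BVar i)
  then show ?case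
    by (simp add: computes_def cgates_wf_def nth_wire_vals_input nth_wire_depths_input)
next
  case (BNot e)
  let ?h = "fst (compile_bexp (n + length gs) e)" and ?w = "snd (compile_bexp (n + length gs) e)"
  have c: "computes n x gs ?h ?w e"
    using BNot by simp
  have "computes n x gs (?h @ [NotG ?w]) (n + length gs + length ?h) (BNot e)"
    using c BNot.prems(1) by (intro computes_snoc) (auto simp: computes_def cgates_wf_def)
  then show ?case
    by simp
next
  case (BAnd e1 e2)
  let ?h1 = "fst (compile_bexp (n + length gs) e1)" and ?w1 = "snd (compile_bexp (n + length gs) e1)"
  let ?h2 = "fst (compile_bexp (n + length (gs @ ?h1)) e2)" and ?w2 = "snd (compile_bexp (n + length (gs @ ?h1)) e2)"
  have c1: "computes n x gs ?h1 ?w1 e1"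
    using BAnd by simp
  have c2: "computes n x (gs @ ?h1) ?h2 ?w2 e2"
    using BAnd.IH(2)[of "gs @ ?h1"] BAnd.prems by simp
  then have "cgates_wf (n + length gs + length ?h1) ?h2"
    by (simp add: computes_def add.assoc)
  then have c1': "computes n x gs (?h1 @ ?h2) ?w1 e1"
    using computes_append[OF BAnd.prems(1) c1] by blast
  have "computes n x gs ((?h1 @ ?h2) @ [AndG ?w1 ?w2]) (n + length gs + length (?h1 @ ?h2)) (BAnd e1 e2)"
    using c1' c2 BAnd.prems(1) by (intro computes_snoc) (auto simp: computes_def cgates_wf_def add.assoc)
  then show ?case
    by (simp add: split_def Let_def add.assoc)
next
  case (BOr e1 e2)
  let ?h1 = "fst (compile_bexp (n + length gs) e1)" and ?w1 = "snd (compile_bexp (n + length gs) e1)"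
  let ?h2 = "fst (compile_bexp (n + length (gs @ ?h1)) e2)" and ?w2 = "snd (compile_bexp (n + length (gs @ ?h1)) e2)"
  have c1: "computes n x gs ?h1 ?w1 e1"
    using BOr by simp
  have c2: "computes n x (gs @ ?h1) ?h2 ?w2 e2"
    using BOr.IH(2)[of "gs @ ?h1"] BOr.prems by simp
  then have "cgates_wf (n + length gs + length ?h1) ?h2"
    by (simp add: computes_def add.assoc)
  then have c1': "computes n x gs (?h1 @ ?h2) ?w1 e1"
    using computes_append[OF BOr.prems(1) c1] by blast
  have "computes n x gs ((?h1 @ ?h2) @ [OrG ?w1 ?w2]) (n + length gs + length (?h1 @ ?h2)) (BOr e1 e2)"
    using c1' c2 BOr.prems(1) by (intro computes_snoc) (auto simp: computes_def cgates_wf_def add.assoc)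
  then show ?case
    by (simp add: split_def Let_def add.assoc)
qed

lemma computes_shift:
  "computes n x (gs @ hs) hs' w e \<Longrightarrow> cgates_wf (n + length gs) hs \<Longrightarrow> computes n x gs (hs @ hs') w e"
  by (simp add: computes_def cgates_wf_append add.assoc)

fun compile_bexps :: "nat \<Rightarrow> bexp list \<Rightarrow> cgate list \<times> nat list" where
  "compile_bexps b [] = ([], [])"
| "compile_bexps b (e # es) =
     (let (h, w) = compile_bexp b e; (hs, ws) = compile_bexps (b + length h) es in (h @ hs, w # ws))"

lemma computes_compile_bexps:
  assumes "length x = n" "\<forall>e\<in>set es. bvars_below n e"
  shows "length (snd (compile_bexps (n + length gs) es)) = length es
    \<and> cgates_wf (n + length gs) (fst (compile_bexps (n + length gs) es))
    \<and> (\<forall>j<length es. computes n x gs (fst (compile_bexps (n + length gs) es))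
          (snd (compile_bexps (n + length gs) es) ! j) (es ! j))"
  using assms(2)
proof (induction es arbitrary: gs)
  case Nil
  then show ?case
    by (simp add: cgates_wf_def)
next
  case (Cons e es)
  let ?h = "fst (compile_bexp (n + length gs) e)" and ?w = "snd (compile_bexp (n + length gs) e)"
  let ?hs = "fst (compile_bexps (n + length (gs @ ?h)) es)" and ?ws = "snd (compile_bexps (n + length (gs @ ?h)) es)"
  have c: "computes n x gs ?h ?w e"
    using computes_compile_bexp assms(1) Cons.prems by simp
  then have h: "cgates_wf (n + length gs) ?h"
    by (simp add: computes_def)
  have IH: "length ?ws = length es \<and> cgates_wf (n + length (gs @ ?h)) ?hs
      \<and> (\<forall>j<length es. computes n x (gs @ ?h) ?hs (?ws ! j) (es ! j))"
    using Cons.IH[of "gs @ ?h"] Cons.prems by simp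
  then have "computes n x gs (?h @ ?hs) ?w e"
    using computes_append[OF assms(1) c] by (simp add: add.assoc)
  moreover have "computes n x gs (?h @ ?hs) (?ws ! j) (es ! j)" if "j < length es" for j
    using IH that h computes_shift by blast
  moreover have "cgates_wf (n + length gs) (?h @ ?hs)"
    using IH h by (simp add: cgates_wf_append add.assoc)
  ultimately have "\<forall>j<length (e # es). computes n x gs (?h @ ?hs) ((?w # ?ws) ! j) ((e # es) ! j)"
    by (simp add: nth_Cons split: nat.split)
  then show ?case
    using IH \<open>cgates_wf (n + length gs) (?h @ ?hs)\<close> by (simp add: split_def Let_def add.assoc)
qed

lemma fold_max_le_iff: "fold max xs z \<le> (M::nat) \<longleftrightarrow> z \<le> M \<and> (\<forall>a\<in>set xs. a \<le> M)"
  by (induction xs arbitrary: z) auto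

lemma ccircuit_of_bexps:
  assumes "\<forall>e\<in>set es. bvars_below n e \<and> bdepth e \<le> D" "length es = n"
  shows "\<exists>C. ccirc_wf n C \<and> ccirc_depth n C \<le> D
    \<and> (\<forall>x. length x = n \<longrightarrow> ccirc_eval C x = map (\<lambda>e. bval e x) es)"
proof (intro exI conjI allI impI)
  let ?C = "compile_bexps n es"
  have C: "length (snd ?C) = n \<and> cgates_wf n (fst ?C)
      \<and> (\<forall>j<n. computes n x [] (fst ?C) (snd ?C ! j) (es ! j))" if "length x = n" for x
    using computes_compile_bexps[of x n es "[]"] assms that by simp
  note C0 = C[of "replicate n False", simplified]
  show "ccirc_wf n ?C"
    using C0 by (auto simp: ccirc_wf_def cgates_wf_def computes_def in_set_conv_nth)
  have "wire_depths n (fst ?C) ! (snd ?C ! j) \<le> D" if "j < n" for j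
    using C0 that assms by (metis computes_def append_Nil nth_mem le_trans)
  then show "ccirc_depth n ?C \<le> D"
    using C0 by (auto simp: ccirc_depth_def fold_max_le_iff in_set_conv_nth)
  show "ccirc_eval ?C x = map (\<lambda>e. bval e x) es" if "length x = n" for x
    using C[OF that] assms(2) by (auto intro!: nth_equalityI simp: ccirc_eval_def computes_def)
qed

definition input_frame :: "nat \<Rightarrow> bframe" where
  "input_frame n = ((\<lambda>i. if i < n then BVar i else bfalse), (\<lambda>i. bfalse))"

lemma pauli_rel_track_sym:
  assumes "length x = n" "\<forall>g\<in>set gs. qgate_wf n g"
  defines "T \<equiv> track_sym gs (input_frame n)"
  shows "\<exists>c. c \<noteq> 0 \<and> pauli_rel n (fold apply_gate gs (basis_state x)) c
    (fst (frame_val x (fst T))) (snd (frame_val x (fst T)))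
    (run_branch gs (map (\<lambda>e. bval e x) (snd T)) (basis_state (replicate n False)))"
proof -
  have "frame_val x (input_frame n) = ((\<lambda>i. i < n \<and> x ! i), (\<lambda>i. False))"
    by (auto simp: frame_val_def input_frame_def)
  then have "pauli_rel n (basis_state x) 1 (fst (frame_val x (input_frame n))) (snd (frame_val x (input_frame n)))
      (basis_state (replicate n False))"
    using pauli_rel_basis_state[OF assms(1)] by simp
  from pauli_rel_fold[OF this _ assms(2)] show ?thesis
    by (simp add: track_pauli_frame_val T_def)
qed

lemma p_simulation:
  assumes "0 < n" "qcirc_wf n Q"
  shows "\<exists>C. ccirc_wf n C \<and> ccirc_depth n C \<le> 3 * length Q + 2 * t_count Q + 7
    \<and> (\<forall>x. length x = n \<longrightarrow> qamp Q x (ccirc_eval C x) \<noteq> 0)"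
proof -
  define gs where "gs = concat Q"
  define P where "P = fst (track_sym gs (input_frame n))"
  define ms where "ms = snd (track_sym gs (input_frame n))"
  define \<phi>\<^sub>0 where "\<phi>\<^sub>0 = basis_state (replicate n False)"
  have gates_wf: "\<forall>g\<in>set gs. qgate_wf n g"
    using assms(2) by (auto simp: gs_def qcirc_wf_def layer_wf_def)
  have "nonzero_on n (run_branch gs bs \<phi>\<^sub>0)" for bs
    using nonzero_on_run_branch[OF _ gates_wf] by (auto simp: nonzero_on_def \<phi>\<^sub>0_def basis_state_def)
  then obtain out where out: "\<And>bs. length (out bs) = n \<and> run_branch gs bs \<phi>\<^sub>0 (out bs) \<noteq> 0"
    unfolding nonzero_on_def by metis
  text \<open>Output a nonzero-amplitude string of the branch selected by the \<open>T\<close> bits, shifted by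
    the \<open>X\<close> part of the final frame.\<close>
  define es where "es = map (\<lambda>i. bxor (bmux ms (\<lambda>bs. out bs ! i)) (fst P i)) [0..<n]"
  have "frame_vars_below n (input_frame n)"
    using assms(1) by (simp add: frame_vars_below_def input_frame_def)
  then have vars: "frame_vars_below n P" "\<forall>m\<in>set ms. bvars_below n m"
    using frame_vars_below_track_sym unfolding P_def ms_def by blast+
  have "\<forall>L\<in>set Q. sorted_wrt (\<lambda>g h. qubits g \<inter> qubits h = {}) L"
    using assms(2) by (auto simp: qcirc_wf_def layer_wf_def sorted_wrt_iff_nth_less)
  moreover have "frame_depth_le (\<lambda>i. 2) (input_frame n)"
    by (simp add: frame_depth_le_def input_frame_def)
  ultimately have depth: "frame_depth_le (\<lambda>i. 2 + 3 * length Q) P" "\<forall>m\<in>set ms. bdepth m \<le> 2 + 3 * length Q"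
    using track_sym_circuit_depth unfolding P_def ms_def gs_def by blast+
  define D where "D = 3 * length Q + 2 * t_count Q + 4"
  have "length ms = t_count Q"
    by (simp add: ms_def length_track_sym_bits t_count_def gs_def)
  then have "bdepth (bmux ms f) \<le> D" for f
    using bdepth_bmux[OF depth(2), of f] unfolding D_def by linarith
  moreover have "bdepth (fst P i) \<le> D" for i
    using depth(1)[unfolded frame_depth_le_def, rule_format, of i, THEN conjunct1] unfolding D_def by linarith
  ultimately have "\<forall>e\<in>set es. bvars_below n e \<and> bdepth e \<le> D + 3"
    using vars assms(1) by (auto simp: es_def frame_vars_below_def bvars_below_bmux)
  moreover have "length es = n"
    by (simp add: es_def)
  ultimately obtain C where C: "ccirc_wf n C" "ccirc_depth n C \<le> D + 3"
    "\<And>x. length x = n \<Longrightarrow> ccirc_eval C x = map (\<lambda>e. bval e x) es"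
    using ccircuit_of_bexps by blast
  have amp: "qamp Q x (ccirc_eval C x) \<noteq> 0" if x: "length x = n" for x
  proof -
    define bs where "bs = map (\<lambda>e. bval e x) ms"
    define U where "U = fst (frame_val x P)"
    obtain c where "c \<noteq> 0" and rel: "pauli_rel n (run_qcirc Q (basis_state x)) c U (snd (frame_val x P))
        (run_branch gs bs \<phi>\<^sub>0)"
      using pauli_rel_track_sym[OF x gates_wf]
      by (auto simp: run_qcirc_def gs_def P_def ms_def bs_def U_def \<phi>\<^sub>0_def)
    have "ccirc_eval C x = xor_mask (out bs) U"
      using C(3)[OF x] out[of bs] by (auto intro!: nth_equalityI simp: es_def bval_bmux bs_def U_def frame_val_def)
    then have "qamp Q x (ccirc_eval C x) = c * z_sign (snd (frame_val x P)) (ccirc_eval C x) * run_branch gs bs \<phi>\<^sub>0 (out bs)"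
      using rel out[of bs] by (simp add: qamp_def pauli_rel_def)
    then show ?thesis
      using \<open>c \<noteq> 0\<close> z_sign_nonzero out by simp
  qed
  have "ccirc_depth n C \<le> 3 * length Q + 2 * t_count Q + 7"
    using C(2) unfolding D_def by linarith
  then show ?thesis
    using C(1) amp by blast
qed

theorem corollary1:
  shows "\<exists>c::real. c > 0 \<and>
    (\<forall>(n::nat) (d::nat) (t::nat) (Q::qcircuit).
       n \<ge> 1 \<longrightarrow> d \<ge> 1 \<longrightarrow> qcirc_wf n Q \<longrightarrow> qdepth Q = d \<longrightarrow> t_count Q = t \<longrightarrow>
       (\<exists>C::ccircuit. ccirc_wf n C \<and> real (ccirc_depth n C) \<le> c * real (d + t) \<and>
          (\<forall>x. length x = n \<longrightarrow> qamp Q x (ccirc_eval C x) \<noteq> 0)))"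
proof (intro exI[of _ 10] conjI allI impI)
  fix n d t :: nat and Q :: qcircuit
  assume "1 \<le> n" "1 \<le> d" "qcirc_wf n Q" "qdepth Q = d" "t_count Q = t"
  then obtain C where "ccirc_wf n C" "ccirc_depth n C \<le> 3 * d + 2 * t + 7"
    "\<forall>x. length x = n \<longrightarrow> qamp Q x (ccirc_eval C x) \<noteq> 0"
    using p_simulation[of n Q] by (auto simp: qdepth_def)
  moreover from this(2) have "ccirc_depth n C \<le> 10 * (d + t)"
    using \<open>1 \<le> d\<close> unfolding distrib_left by linarith
  then have "real (ccirc_depth n C) \<le> 10 * real (d + t)"
    by (metis of_nat_le_iff of_nat_mult of_nat_numeral)
  ultimately show "\<exists>C. ccirc_wf n C \<and> real (ccirc_depth n C) \<le> 10 * real (d + t)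
      \<and> (\<forall>x. length x = n \<longrightarrow> qamp Q x (ccirc_eval C x) \<noteq> 0)"
    by blast
qed simp

end
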